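(* Let $d\ge1$, $X=\{1,\dots,d+1\}$, integers $0\le m_1<\dots<m_{d+1}$, and $P$ the $d$-permutohedron, the convex hull of $\{\sum_i m_{i\pi}v_i:\pi\in\mathfrak S_{d+1}\}\subset\mathbb R^{d+1}$. For $\varnothing\ne J\subsetneq X$ let $a_J$ be the facet of $P$ which is the convex hull of the vertices $\sum_i m_{i\pi}v_i$ with $\sum_{j\in J}m_{j\pi}=m_1+\dots+m_{|J|}$. Then the face monoid of $P$ has a presentation with generators $a_J$ ($\varnothing\ne J\subsetneq X$) and relations $a_J^2=a_J$ for all $J$; $a_Ja_K=a_Ka_J$ for all $J,K$; and $a_Ja_K=a_Ja_Ka_L$ for all $J,K$ with $J\ne J\cap K\ne K$ and all $L$.
   Context: $v_1,\dots,v_{d+1}$ is the standard basis of $\mathbb R^{d+1}$. The face monoid of a polytope is the set of its faces (including the polytope itself and $\varnothing$) under intersection. *)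

theory Defs
  imports "HOL-Analysis.Analysis"
begin

text \<open>Coordinates of the ambient space are indexed by a finite type 'n with
  CARD('n) = d+1; a permutation is a bijection from the coordinate set onto
  the label set {1..d+1}.\<close>

definition perm_vertex :: "(nat \<Rightarrow> int) \<Rightarrow> ('n::finite \<Rightarrow> nat) \<Rightarrow> real ^ 'n" where
  "perm_vertex m s = (\<chi> i. real_of_int (m (s i)))"

definition perm_labellings :: "('n::finite \<Rightarrow> nat) set" where
  "perm_labellings = {s. bij_betw s (UNIV :: 'n set) {1..CARD('n)}}"

definition permutohedron :: "(nat \<Rightarrow> int) \<Rightarrow> (real ^ 'n::finite) set" where
  "permutohedron m = convex hull (perm_vertex m ` perm_labellings)"

definition perm_facet :: "(nat \<Rightarrow> int) \<Rightarrow> 'n::finite set \<Rightarrow> (real ^ 'n) set" where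
  "perm_facet m J = convex hull (perm_vertex m `
     {s \<in> perm_labellings. (\<Sum>j\<in>J. m (s j)) = (\<Sum>k=1..card J. m k)})"

definition perm_gens :: "'n::finite set set" where
  "perm_gens = {J. J \<noteq> {} \<and> J \<noteq> UNIV}"

text \<open>Evaluation of a word in the generators in the face monoid (product = intersection,
  identity = P).\<close>
definition perm_eval :: "(nat \<Rightarrow> int) \<Rightarrow> 'n::finite set list \<Rightarrow> (real ^ 'n) set" where
  "perm_eval m w = permutohedron m \<inter> \<Inter> (perm_facet m ` set w)"

inductive perm_relator :: "'n::finite set list \<Rightarrow> 'n set list \<Rightarrow> bool" where
  idem: "J \<in> perm_gens \<Longrightarrow> perm_relator [J, J] [J]"
| comm: "J \<in> perm_gens \<Longrightarrow> K \<in> perm_gens \<Longrightarrow> perm_relator [J, K] [K, J]"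
| absorb: "J \<in> perm_gens \<Longrightarrow> K \<in> perm_gens \<Longrightarrow> L \<in> perm_gens \<Longrightarrow>
     J \<noteq> J \<inter> K \<Longrightarrow> J \<inter> K \<noteq> K \<Longrightarrow> perm_relator [J, K] [J, K, L]"

inductive perm_cong :: "'n::finite set list \<Rightarrow> 'n set list \<Rightarrow> bool" where
  refl: "set w \<subseteq> perm_gens \<Longrightarrow> perm_cong w w"
| step: "perm_relator l r \<Longrightarrow> set u \<subseteq> perm_gens \<Longrightarrow> set v \<subseteq> perm_gens \<Longrightarrow>
     perm_cong (u @ l @ v) (u @ r @ v)"
| sym: "perm_cong w w' \<Longrightarrow> perm_cong w' w"
| trans: "perm_cong w w' \<Longrightarrow> perm_cong w' w'' \<Longrightarrow> perm_cong w w''"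

end

theory Submission
  imports Defs
begin

text \<open>For a labelling s and a set J of coordinates, the sum of m over the labels of J is at
  least m 1 + ... + m |J|, with equality iff J carries the smallest labels. Hence the facet a_J
  is cut out by a valid inequality, and a word w evaluates to the convex hull of the vertices
  whose labellings have every letter of w as an initial block. Such labellings exist iff the
  letters form a chain of sets, and then they determine the chain; since the vertices lie on a
  sphere, the face determines its vertex set. Conversely an exchange argument shows that a
  linear functional a is maximised exactly at the labellings ordered by a, so every nonempty
  face is the face of the chain of sublevel sets of a. On the word side, the relations let any
  word be reordered and deduplicated, and identify all words whose letters do not form a chain.\<close>

section \<open>Labellings and initial blocks\<close>

lemma perm_labellingsD:
  "s \<in> perm_labellings \<Longrightarrow> bij_betw s (UNIV :: 'n::finite set) {1..CARD('n)}"
  by (simp add: perm_labellings_def)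

lemma perm_labelling_range:
  assumes "s \<in> (perm_labellings :: ('n::finite \<Rightarrow> nat) set)"
  shows "s i \<in> {1..CARD('n)}"
  using bij_betw_apply[OF perm_labellingsD[OF assms]] by simp

lemma finite_perm_labellings: "finite (perm_labellings :: ('n::finite \<Rightarrow> nat) set)"
proof -
  have "perm_labellings \<subseteq> PiE (UNIV :: 'n set) (\<lambda>_. {1..CARD('n)})"
    by (auto simp: PiE_def extensional_def dest: perm_labelling_range)
  then show ?thesis
    by (rule finite_subset) (intro finite_PiE, auto)
qed

lemma sum_initial_segment_less:
  fixes m :: "nat \<Rightarrow> 'a::linordered_idom"
  assumes m: "strict_mono_on {1..N} m" and A: "A \<subseteq> {1..N}" and ne: "A \<noteq> {1..card A}"
  shows "(\<Sum>k=1..card A. m k) < sum m A"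
proof -
  define B where "B = {1..card A}"
  have fin: "finite A" "finite B" using finite_subset[OF A] by (auto simp: B_def)
  have "card (A \<inter> B) + card (A - B) = card (A \<inter> B) + card (B - A)"
    using card_Int_Diff[OF fin(1), of B] card_Int_Diff[OF fin(2), of A]
    by (simp add: B_def inf_commute)
  then have cards: "card (A - B) = card (B - A)" by simp
  have "\<not> A \<subseteq> B"
  proof
    assume "A \<subseteq> B"
    then have "A = B" by (rule card_subset_eq[OF fin(2)]) (simp add: B_def)
    with ne show False unfolding B_def by blast
  qed
  then obtain x where x: "x \<in> A" "x \<notin> B" by blast
  have "B - A \<noteq> {}"
  proof
    assume "B - A = {}"
    then have "card (A - B) = 0" by (simp only: cards card.empty)
    with fin x show False by auto
  qed
  have cN: "card A + 1 \<le> N" using x A by (auto simp: B_def)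
  have small: "m y < m (card A + 1)" if "y \<in> B - A" for y
    using that cN by (intro strict_mono_onD[OF m]) (auto simp: B_def)
  have large: "m (card A + 1) \<le> m y" if "y \<in> A - B" for y
  proof (cases "y = card A + 1")
    case False
    with that A have "card A + 1 < y" "y \<le> N" by (auto simp: B_def)
    with cN have "m (card A + 1) < m y" by (intro strict_mono_onD[OF m]) auto
    then show ?thesis by simp
  qed simp
  have "sum m (B - A) < (\<Sum>y\<in>B - A. m (card A + 1))"
    by (rule sum_strict_mono) (use fin \<open>B - A \<noteq> {}\<close> small in auto)
  also have "\<dots> = (\<Sum>y\<in>A - B. m (card A + 1))" by (simp add: cards)
  also have "\<dots> \<le> sum m (A - B)" by (rule sum_mono) (rule large)
  finally have "sum m (B - A) < sum m (A - B)" .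
  moreover have "sum m A = sum m (A \<inter> B) + sum m (A - B)" by (rule sum.Int_Diff[OF fin(1)])
  moreover have "sum m B = sum m (A \<inter> B) + sum m (B - A)"
    using sum.Int_Diff[OF fin(2), of m A] by (simp add: inf_commute)
  ultimately show ?thesis by (simp add: B_def)
qed

definition initial_block :: "('n \<Rightarrow> nat) \<Rightarrow> 'n set \<Rightarrow> bool" where
  "initial_block s J \<longleftrightarrow> (\<forall>i\<in>J. \<forall>j. j \<notin> J \<longrightarrow> s i < s j)"

lemma initial_block_iff_image:
  assumes s: "s \<in> (perm_labellings :: ('n::finite \<Rightarrow> nat) set)"
  shows "initial_block s J \<longleftrightarrow> s ` J = {1..card J}"
proof -
  have inj: "inj s" and range: "range s = {1..CARD('n)}"
    using perm_labellingsD[OF s] by (auto simp: bij_betw_def)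
  have card_sJ: "card (s ` J) = card J" by (meson card_image inj inj_on_subset subset_UNIV)
  show ?thesis
  proof
    assume init: "initial_block s J"
    have "s i \<le> card J" if i: "i \<in> J" for i
    proof -
      have "{1..s i} \<subseteq> s ` J"
      proof
        fix l assume l: "l \<in> {1..s i}"
        moreover have "s i \<le> CARD('n)" using range by auto
        ultimately obtain j where j: "l = s j" using range by (metis atLeastAtMost_iff image_iff le_trans)
        then have "j \<in> J" using init i l unfolding initial_block_def by force
        then show "l \<in> s ` J" using j by blast
      qed
      then show ?thesis using card_mono[of "s ` J" "{1..s i}"] card_sJ by simp
    qed
    moreover have "1 \<le> s i" for i using range by auto
    ultimately have "s ` J \<subseteq> {1..card J}" by auto
    then show "s ` J = {1..card J}" using card_subset_eq[of "{1..card J}"] card_sJ by simp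
  next
    assume img: "s ` J = {1..card J}"
    show "initial_block s J" unfolding initial_block_def
    proof (intro ballI allI impI)
      fix i j assume ij: "i \<in> J" "j \<notin> J"
      have "s i \<le> card J" using img ij(1) by (metis atLeastAtMost_iff imageI)
      moreover have "s j \<notin> s ` J" using inj ij(2) by (simp add: inj_image_mem_iff)
      then have "\<not> s j \<le> card J" using img range by auto
      ultimately show "s i < s j" by simp
    qed
  qed
qed

lemma sum_labels_lower_bound:
  fixes m :: "nat \<Rightarrow> 'a::linordered_idom"
  assumes m: "strict_mono_on {1..CARD('n)} m" and s: "s \<in> (perm_labellings :: ('n::finite \<Rightarrow> nat) set)"
  shows "(\<Sum>k=1..card J. m k) \<le> (\<Sum>j\<in>J. m (s j))"
    and "(\<Sum>j\<in>J. m (s j)) = (\<Sum>k=1..card J. m k) \<longleftrightarrow> initial_block s J"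
proof -
  have inj: "inj_on s J"
    using perm_labellingsD[OF s] by (metis bij_betw_def inj_on_subset subset_UNIV)
  have reindex: "(\<Sum>j\<in>J. m (s j)) = sum m (s ` J)" by (simp add: sum.reindex[OF inj])
  have card_image: "card (s ` J) = card J" by (rule card_image[OF inj])
  have less: "(\<Sum>k=1..card J. m k) < (\<Sum>j\<in>J. m (s j))" if "\<not> initial_block s J"
  proof -
    have "s ` J \<subseteq> {1..CARD('n)}" using perm_labelling_range[OF s] by blast
    moreover have "s ` J \<noteq> {1..card (s ` J)}"
      using that by (simp add: card_image initial_block_iff_image[OF s])
    ultimately have "sum m {1..card (s ` J)} < sum m (s ` J)" by (rule sum_initial_segment_less[OF m])
    then show ?thesis by (simp add: reindex card_image)
  qed
  have eq: "(\<Sum>j\<in>J. m (s j)) = (\<Sum>k=1..card J. m k)" if "initial_block s J"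
    using that by (simp add: reindex initial_block_iff_image[OF s])
  show "(\<Sum>k=1..card J. m k) \<le> (\<Sum>j\<in>J. m (s j))"
    using less eq by fastforce
  show "(\<Sum>j\<in>J. m (s j)) = (\<Sum>k=1..card J. m k) \<longleftrightarrow> initial_block s J"
    using less eq by fastforce
qed

lemma rank_labelling:
  fixes key :: "'n::finite \<Rightarrow> 'a::linorder"
  assumes "inj key"
  defines "s \<equiv> \<lambda>i. card {j. key j \<le> key i}"
  shows "s \<in> perm_labellings" and "\<And>i j. key i < key j \<Longrightarrow> s i < s j"
proof -
  show mono: "s i < s j" if "key i < key j" for i j
  proof -
    have "{k. key k \<le> key i} \<subset> {k. key k \<le> key j}"
      using that by (auto intro: order.trans dest: leD)
    then show ?thesis unfolding s_def by (intro psubset_card_mono) auto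
  qed
  have "inj s"
  proof (rule injI)
    fix i j assume "s i = s j"
    then have "\<not> key i < key j" "\<not> key j < key i" using mono by (metis less_irrefl)+
    then show "i = j" using \<open>inj key\<close> by (metis inj_eq linorder_neqE)
  qed
  moreover have "s ` UNIV \<subseteq> {1..CARD('n)}"
    unfolding s_def by (auto simp: Suc_le_eq card_gt_0_iff intro!: card_mono)
  ultimately have "s ` UNIV = {1..CARD('n)}"
    by (intro card_subset_eq) (auto simp: card_image)
  with \<open>inj s\<close> show "s \<in> perm_labellings"
    by (simp add: perm_labellings_def bij_betw_def)
qed

lemma exists_labelling_strict_mono:
  fixes c :: "'n::finite \<Rightarrow> nat"
  obtains s where "s \<in> perm_labellings" and "\<And>i j. c i < c j \<Longrightarrow> s i < s j"
proof -
  define N where "N = CARD('n)"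
  obtain e where e: "bij_betw e (UNIV :: 'n set) {0..<N}"
    using ex_bij_betw_finite_nat[of "UNIV :: 'n set"] by (auto simp: N_def)
  have e_less: "e i < N" for i using e bij_betw_apply by fastforce
  \<comment> \<open>ties of c are broken by the enumeration e\<close>
  define key where "key i = c i * N + e i" for i
  have "inj key"
  proof (rule injI)
    fix i j assume "key i = key j"
    then have "e i = e j" using e_less by (metis key_def mod_mult_self3 mod_less)
    then show "i = j" using e by (auto simp: bij_betw_def inj_eq)
  qed
  moreover have "key i < key j" if "c i < c j" for i j
  proof -
    have "key i < (c i + 1) * N" using e_less[of i] by (simp add: key_def)
    also have "\<dots> \<le> c j * N" using that by (intro mult_right_mono) auto
    finally show ?thesis by (simp add: key_def)
  qed
  ultimately show ?thesis using that rank_labelling by metis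
qed

section \<open>Labellings compatible with a chain\<close>

definition compatible_labellings :: "'n::finite set set \<Rightarrow> ('n \<Rightarrow> nat) set" where
  "compatible_labellings S = {s \<in> perm_labellings. \<forall>J\<in>S. initial_block s J}"

lemma compatible_labellings_subset: "compatible_labellings S \<subseteq> perm_labellings"
  by (auto simp: compatible_labellings_def)

lemma finite_compatible_labellings: "finite (compatible_labellings S)"
  by (rule finite_subset[OF compatible_labellings_subset finite_perm_labellings])

lemma compatible_labellings_empty:
  assumes "\<not> chain\<^sub>\<subseteq> S"
  shows "compatible_labellings S = {}"
proof -
  obtain J K i j where "J \<in> S" "K \<in> S" "i \<in> J" "i \<notin> K" "j \<in> K" "j \<notin> J"
    using assms unfolding chain_subset_def by blast
  then have "\<not> (initial_block s J \<and> initial_block s K)" for s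
    unfolding initial_block_def by (meson less_asym)
  with \<open>J \<in> S\<close> \<open>K \<in> S\<close> show ?thesis by (auto simp: compatible_labellings_def)
qed

text \<open>Counting the members of a chain that avoid an element orders the elements so that every
  member of the chain is an initial block.\<close>

lemma chain_avoiding_card_less:
  fixes S :: "'n::finite set set"
  assumes "chain\<^sub>\<subseteq> S" "K \<in> S" "i \<in> K" "j \<notin> K"
  shows "card {K\<in>S. i \<notin> K} < card {K\<in>S. j \<notin> K}"
proof -
  have "{K\<in>S. i \<notin> K} \<subset> {K\<in>S. j \<notin> K}"
    using assms unfolding chain_subset_def by blast
  then show ?thesis by (intro psubset_card_mono) auto
qed

lemma compatible_labellings_nonempty:
  fixes S :: "'n::finite set set"
  assumes "chain\<^sub>\<subseteq> S"
  shows "compatible_labellings S \<noteq> {}"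
proof -
  obtain s where s: "s \<in> perm_labellings"
    and mono: "\<And>i j. card {K\<in>S. i \<notin> K} < card {K\<in>S. j \<notin> K} \<Longrightarrow> s i < s j"
    using exists_labelling_strict_mono[of "\<lambda>i. card {K\<in>S. i \<notin> K}"] by blast
  have "initial_block s K" if "K \<in> S" for K
    unfolding initial_block_def
    using chain_avoiding_card_less[OF assms that] by (blast intro: mono)
  with s show ?thesis by (auto simp: compatible_labellings_def)
qed

lemma chain_point_in_supersets:
  fixes S :: "'a set set"
  assumes "finite S" "chain\<^sub>\<subseteq> S" "J \<notin> S" "J \<noteq> UNIV"
  obtains j where "j \<notin> J" "\<And>K. K \<in> S \<Longrightarrow> J \<subseteq> K \<Longrightarrow> j \<in> K"
proof (cases "{K\<in>S. J \<subseteq> K} = {}")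
  case True
  obtain j where "j \<notin> J" using \<open>J \<noteq> UNIV\<close> by blast
  with True show ?thesis using that by blast
next
  case False
  have "subset.chain UNIV {K\<in>S. J \<subseteq> K}"
    using assms(2) unfolding chain_subset_alt_def[symmetric] chain_subset_def by blast
  then have "\<Inter>{K\<in>S. J \<subseteq> K} \<in> {K\<in>S. J \<subseteq> K}"
    using Inter_in_chain[OF _ False] assms(1) by simp
  with \<open>J \<notin> S\<close> have "\<not> \<Inter>{K\<in>S. J \<subseteq> K} \<subseteq> J" by auto
  then obtain j where "j \<in> \<Inter>{K\<in>S. J \<subseteq> K}" "j \<notin> J" by blast
  then show ?thesis using that by simp
qed

lemma chain_point_outside_subsets:
  fixes S :: "'a set set"
  assumes "finite S" "chain\<^sub>\<subseteq> S" "J \<notin> S" "J \<noteq> {}"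
  obtains i where "i \<in> J" "\<And>K. K \<in> S \<Longrightarrow> K \<subseteq> J \<Longrightarrow> i \<notin> K"
proof (cases "{K\<in>S. K \<subseteq> J} = {}")
  case True
  obtain i where "i \<in> J" using \<open>J \<noteq> {}\<close> by blast
  with True show ?thesis using that by blast
next
  case False
  have "subset.chain UNIV {K\<in>S. K \<subseteq> J}"
    using assms(2) unfolding chain_subset_alt_def[symmetric] chain_subset_def by blast
  then have "\<Union>{K\<in>S. K \<subseteq> J} \<in> {K\<in>S. K \<subseteq> J}"
    using Union_in_chain[OF _ False] assms(1) by simp
  with \<open>J \<notin> S\<close> have "\<not> J \<subseteq> \<Union>{K\<in>S. K \<subseteq> J}" by auto
  then obtain i where "i \<in> J" "i \<notin> \<Union>{K\<in>S. K \<subseteq> J}" by blast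
  then show ?thesis using that by blast
qed

lemma chain_separating_labelling:
  fixes S :: "'n::finite set set"
  assumes chain: "chain\<^sub>\<subseteq> S" and "J \<notin> S" "J \<noteq> {}" "J \<noteq> UNIV"
  obtains s where "s \<in> compatible_labellings S" "\<not> initial_block s J"
proof (cases "chain\<^sub>\<subseteq> (insert J S)")
  case False
  obtain s where s: "s \<in> compatible_labellings S"
    using compatible_labellings_nonempty[OF chain] by blast
  have "\<not> initial_block s J"
  proof
    assume "initial_block s J"
    with s have "s \<in> compatible_labellings (insert J S)" by (simp add: compatible_labellings_def)
    with compatible_labellings_empty[OF False] show False by blast
  qed
  with s show ?thesis by (rule that)
next
  case True
  obtain j where j: "j \<notin> J" "\<And>K. K \<in> S \<Longrightarrow> J \<subseteq> K \<Longrightarrow> j \<in> K"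
    using chain_point_in_supersets[OF finite chain \<open>J \<notin> S\<close> \<open>J \<noteq> UNIV\<close>] by blast
  obtain i where i: "i \<in> J" "\<And>K. K \<in> S \<Longrightarrow> K \<subseteq> J \<Longrightarrow> i \<notin> K"
    using chain_point_outside_subsets[OF finite chain \<open>J \<notin> S\<close> \<open>J \<noteq> {}\<close>] by blast
  have avoid: "{K\<in>S. j \<notin> K} \<subseteq> {K\<in>S. i \<notin> K}"
  proof safe
    fix K assume "K \<in> S" "j \<notin> K" "i \<in> K"
    then have "K \<subseteq> J \<or> J \<subseteq> K" using True by (simp add: chain_subset_def)
    then show False using i j \<open>K \<in> S\<close> \<open>j \<notin> K\<close> \<open>i \<in> K\<close> by blast
  qed
  \<comment> \<open>doubling the avoidance count and adding 1 on J breaks the tie between i and j against J\<close>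
  define c where "c k = 2 * card {K\<in>S. k \<notin> K} + (if k \<in> J then 1 else 0)" for k
  obtain s where s: "s \<in> perm_labellings" and mono: "\<And>a b. c a < c b \<Longrightarrow> s a < s b"
    using exists_labelling_strict_mono by blast
  have "initial_block s K" if "K \<in> S" for K
    unfolding initial_block_def
  proof (intro ballI allI impI)
    fix a b assume "a \<in> K" "b \<notin> K"
    then have "card {K\<in>S. a \<notin> K} < card {K\<in>S. b \<notin> K}"
      by (rule chain_avoiding_card_less[OF chain that])
    then show "s a < s b" by (intro mono) (simp add: c_def)
  qed
  with s have "s \<in> compatible_labellings S" by (simp add: compatible_labellings_def)
  moreover have "card {K\<in>S. j \<notin> K} \<le> card {K\<in>S. i \<notin> K}"
    using avoid by (rule card_mono[rotated]) simp
  then have "c j < c i" using i(1) j(1) by (simp add: c_def)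
  then have "s j < s i" by (rule mono)
  then have "\<not> initial_block s J" using i j unfolding initial_block_def by (meson less_asym)
  ultimately show ?thesis by (rule that)
qed

lemma compatible_labellings_inj:
  fixes S T :: "'n::finite set set"
  assumes "S \<subseteq> perm_gens" "T \<subseteq> perm_gens"
    and eq: "compatible_labellings S = compatible_labellings T"
    and ne: "compatible_labellings S \<noteq> {}"
  shows "S = T"
proof -
  have subset: "A \<subseteq> B"
    if A: "A \<subseteq> perm_gens" and B: "chain\<^sub>\<subseteq> B"
      and AB: "compatible_labellings A = compatible_labellings B"
    for A B :: "'n set set"
  proof
    fix J assume "J \<in> A"
    show "J \<in> B"
    proof (rule ccontr)
      assume "J \<notin> B"
      moreover have "J \<noteq> {}" "J \<noteq> UNIV" using \<open>J \<in> A\<close> A by (auto simp: perm_gens_def)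
      ultimately obtain s where "s \<in> compatible_labellings B" "\<not> initial_block s J"
        using chain_separating_labelling[OF B] by blast
      then show False using AB \<open>J \<in> A\<close> by (auto simp: compatible_labellings_def)
    qed
  qed
  have "chain\<^sub>\<subseteq> S" "chain\<^sub>\<subseteq> T"
    using ne eq compatible_labellings_empty[of S] compatible_labellings_empty[of T] by auto
  then show ?thesis
    using subset[OF assms(1) _ eq] subset[OF assms(2) _ eq[symmetric]] by (intro subset_antisym)
qed

section \<open>Convex hulls of points on a sphere\<close>

lemma convex_hull_Int_supporting_hyperplane:
  fixes V :: "'a::euclidean_space set"
  assumes fin: "finite V" and le: "\<And>v. v \<in> V \<Longrightarrow> a \<bullet> v \<le> b"
  shows "convex hull V \<inter> {x. a \<bullet> x = b} = convex hull {v\<in>V. a \<bullet> v = b}"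
proof
  show "convex hull {v\<in>V. a \<bullet> v = b} \<subseteq> convex hull V \<inter> {x. a \<bullet> x = b}"
  proof (rule Int_greatest)
    show "convex hull {v\<in>V. a \<bullet> v = b} \<subseteq> convex hull V" by (rule hull_mono) blast
    show "convex hull {v\<in>V. a \<bullet> v = b} \<subseteq> {x. a \<bullet> x = b}"
      by (rule hull_minimal) (auto simp: convex_hyperplane)
  qed
next
  have "convex hull V \<subseteq> {x. a \<bullet> x \<le> b}"
    by (rule hull_minimal) (use le in \<open>auto simp: convex_halfspace_le\<close>)
  then have "(convex hull V \<inter> {x. a \<bullet> x = b}) face_of convex hull V"
    by (intro face_of_Int_supporting_hyperplane_le) (auto simp: convex_convex_hull)
  then obtain V' where V': "V' \<subseteq> V" "convex hull V \<inter> {x. a \<bullet> x = b} = convex hull V'"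
    using face_of_convex_hull_subset[OF finite_imp_compact[OF fin]] by blast
  have "V' \<subseteq> convex hull V \<inter> {x. a \<bullet> x = b}"
    unfolding V'(2) by (rule hull_subset)
  with V'(1) have "V' \<subseteq> {v\<in>V. a \<bullet> v = b}" by blast
  then show "convex hull V \<inter> {x. a \<bullet> x = b} \<subseteq> convex hull {v\<in>V. a \<bullet> v = b}"
    unfolding V'(2) by (rule hull_mono)
qed

text \<open>The tangent hyperplane at x supports the hull and meets the sphere only in x.\<close>

lemma mem_convex_hull_equal_norm:
  fixes x :: "'a::euclidean_space"
  assumes fin: "finite V" and norm: "\<And>v. v \<in> V \<Longrightarrow> norm v = norm x"
    and x: "x \<in> convex hull V"
  shows "x \<in> V"
proof -
  have le: "x \<bullet> v \<le> x \<bullet> x" if "v \<in> V" for v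
  proof -
    have "x \<bullet> v \<le> norm x * norm v" by (rule norm_cauchy_schwarz)
    also have "\<dots> = x \<bullet> x" by (simp add: norm[OF that] dot_square_norm power2_eq_square)
    finally show ?thesis .
  qed
  have "x \<in> convex hull V \<inter> {y. x \<bullet> y = x \<bullet> x}" using x by simp
  then have "x \<in> convex hull {v\<in>V. x \<bullet> v = x \<bullet> x}"
    by (simp only: convex_hull_Int_supporting_hyperplane[OF fin le])
  then have "{v\<in>V. x \<bullet> v = x \<bullet> x} \<noteq> {}" by (metis convex_hull_empty empty_iff)
  then obtain v where v: "v \<in> V" "x \<bullet> v = x \<bullet> x" by blast
  have "(x - v) \<bullet> (x - v) = x \<bullet> x - 2 * (x \<bullet> v) + v \<bullet> v"
    by (simp add: inner_diff_left inner_diff_right inner_commute)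
  also have "\<dots> = 0" using v(2) norm[OF v(1)] by (simp add: dot_square_norm)
  finally have "x = v" by simp
  with v show ?thesis by simp
qed

lemma convex_hull_eq_imp_eq_equal_norm:
  fixes V W :: "'a::euclidean_space set"
  assumes "finite V" "finite W" and norm: "\<And>v. v \<in> V \<union> W \<Longrightarrow> norm v = r"
    and eq: "convex hull V = convex hull W"
  shows "V = W"
proof -
  have sub: "A \<subseteq> B"
    if B: "finite B" and nAB: "\<And>v. v \<in> A \<union> B \<Longrightarrow> norm v = r"
      and AB: "convex hull A = convex hull B" for A B :: "'a set"
  proof
    fix x assume "x \<in> A"
    then have "x \<in> convex hull B" using hull_subset[of A convex] AB by blast
    moreover have "norm v = norm x" if "v \<in> B" for v
      using nAB[of v] nAB[of x] \<open>x \<in> A\<close> that by simp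
    ultimately show "x \<in> B" using mem_convex_hull_equal_norm[OF B] by blast
  qed
  show ?thesis
  proof (rule subset_antisym)
    show "V \<subseteq> W" by (rule sub) (use assms in auto)
    show "W \<subseteq> V" by (rule sub) (use assms in auto)
  qed
qed

section \<open>Words as faces of the permutohedron\<close>

definition char_vec :: "'n::finite set \<Rightarrow> real ^ 'n" where
  "char_vec J = (\<chi> i. if i \<in> J then 1 else 0)"

definition facet_level :: "(nat \<Rightarrow> int) \<Rightarrow> 'n set \<Rightarrow> real" where
  "facet_level m J = real_of_int (\<Sum>k=1..card J. m k)"

lemma inner_char_vec_perm_vertex:
  "char_vec J \<bullet> perm_vertex m s = real_of_int (\<Sum>j\<in>J. m (s j))"
proof -
  have "char_vec J \<bullet> perm_vertex m s = (\<Sum>i\<in>UNIV. if i \<in> J then real_of_int (m (s i)) else 0)"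
    unfolding inner_vec_def char_vec_def perm_vertex_def by (intro sum.cong) auto
  then show ?thesis by (simp add: sum.If_cases)
qed

lemma facet_level_le_perm_vertex:
  assumes m: "strict_mono_on {1..CARD('n)} m" and s: "s \<in> (perm_labellings :: ('n::finite \<Rightarrow> nat) set)"
  shows "facet_level m J \<le> char_vec J \<bullet> perm_vertex m s"
    and "char_vec J \<bullet> perm_vertex m s = facet_level m J \<longleftrightarrow> initial_block s J"
  using sum_labels_lower_bound[OF m s, of J]
  by (simp_all only: inner_char_vec_perm_vertex facet_level_def of_int_le_iff of_int_eq_iff)

lemma facet_level_le_permutohedron:
  assumes m: "strict_mono_on {1..CARD('n)} m" and x: "x \<in> (permutohedron m :: (real ^ 'n::finite) set)"
  shows "facet_level m J \<le> char_vec J \<bullet> x"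
proof -
  have "permutohedron m \<subseteq> {x :: real ^ 'n. facet_level m J \<le> char_vec J \<bullet> x}"
    unfolding permutohedron_def
    by (rule hull_minimal) (auto simp: convex_halfspace_ge facet_level_le_perm_vertex(1)[OF m])
  with x show ?thesis by blast
qed

lemma permutohedron_Int_facet_hyperplanes:
  fixes S :: "'n::finite set set"
  assumes m: "strict_mono_on {1..CARD('n)} m"
  shows "permutohedron m \<inter> {x. \<forall>J\<in>S. char_vec J \<bullet> x = facet_level m J}
    = convex hull (perm_vertex m ` compatible_labellings S)"
proof -
  have "finite S" by simp
  then show ?thesis
  proof (induction S)
    case empty
    show ?case by (simp add: permutohedron_def compatible_labellings_def)
  next
    case (insert K S)
    let ?V = "perm_vertex m ` compatible_labellings S"
    have "permutohedron m \<inter> {x. \<forall>J\<in>insert K S. char_vec J \<bullet> x = facet_level m J}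
        = convex hull ?V \<inter> {x. (- char_vec K) \<bullet> x = - facet_level m K}"
      using insert.IH by auto
    also have "\<dots> = convex hull {v\<in>?V. (- char_vec K) \<bullet> v = - facet_level m K}"
    proof (rule convex_hull_Int_supporting_hyperplane)
      show "finite ?V" by (intro finite_imageI finite_compatible_labellings)
    qed (auto simp: compatible_labellings_def facet_level_le_perm_vertex(1)[OF m])
    also have "{v\<in>?V. (- char_vec K) \<bullet> v = - facet_level m K}
        = perm_vertex m ` compatible_labellings (insert K S)"
      by (auto simp: compatible_labellings_def facet_level_le_perm_vertex(2)[OF m])
    finally show ?case .
  qed
qed

lemma perm_facet_eq:
  assumes m: "strict_mono_on {1..CARD('n)} m"
  shows "perm_facet m (J :: 'n::finite set) = permutohedron m \<inter> {x. char_vec J \<bullet> x = facet_level m J}"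
proof -
  have "{s \<in> perm_labellings. (\<Sum>j\<in>J. m (s j)) = (\<Sum>k=1..card J. m k)} = compatible_labellings {J}"
    using sum_labels_lower_bound(2)[OF m] unfolding compatible_labellings_def by blast
  then show ?thesis
    using permutohedron_Int_facet_hyperplanes[OF m, of "{J}"] by (simp add: perm_facet_def)
qed

lemma perm_eval_eq_convex_hull:
  assumes m: "strict_mono_on {1..CARD('n)} m"
  shows "perm_eval m (w :: 'n::finite set list)
    = convex hull (perm_vertex m ` compatible_labellings (set w))"
proof -
  have "perm_eval m w = permutohedron m \<inter> {x. \<forall>J\<in>set w. char_vec J \<bullet> x = facet_level m J}"
    by (auto simp: perm_eval_def perm_facet_eq[OF m])
  then show ?thesis by (simp add: permutohedron_Int_facet_hyperplanes[OF m])
qed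

lemma inj_on_perm_vertex:
  assumes m: "strict_mono_on {1..CARD('n)} m"
  shows "inj_on (perm_vertex m) (perm_labellings :: ('n::finite \<Rightarrow> nat) set)"
proof
  fix s s' :: "'n \<Rightarrow> nat"
  assume s: "s \<in> perm_labellings" and s': "s' \<in> perm_labellings"
    and eq: "perm_vertex m s = perm_vertex m s'"
  show "s = s'"
  proof
    fix i
    have "m (s i) = m (s' i)"
      using arg_cong[OF eq, of "\<lambda>x. x $ i"] by (simp add: perm_vertex_def)
    then show "s i = s' i"
      using strict_mono_on_imp_inj_on[OF m] perm_labelling_range[OF s] perm_labelling_range[OF s']
      by (meson inj_onD)
  qed
qed

lemma norm_perm_vertex:
  assumes s: "s \<in> (perm_labellings :: ('n::finite \<Rightarrow> nat) set)"
  shows "norm (perm_vertex m s) = sqrt (\<Sum>k=1..CARD('n). (real_of_int (m k))\<^sup>2)"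
proof -
  have "perm_vertex m s \<bullet> perm_vertex m s = (\<Sum>i\<in>UNIV. (\<lambda>k. (real_of_int (m k))\<^sup>2) (s i))"
    unfolding inner_vec_def perm_vertex_def by (simp add: power2_eq_square)
  also have "\<dots> = (\<Sum>k=1..CARD('n). (real_of_int (m k))\<^sup>2)"
    by (rule sum.reindex_bij_betw[OF perm_labellingsD[OF s]])
  finally show ?thesis by (simp add: norm_eq_sqrt_inner)
qed

lemma perm_eval_eq_iff:
  assumes m: "strict_mono_on {1..CARD('n)} m"
  shows "perm_eval m (w1 :: 'n::finite set list) = perm_eval m w2
    \<longleftrightarrow> compatible_labellings (set w1) = compatible_labellings (set w2)"
proof
  let ?L1 = "compatible_labellings (set w1)" and ?L2 = "compatible_labellings (set w2)"
  have fin: "finite (perm_vertex m ` compatible_labellings S)" for S :: "'n set set"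
    by (intro finite_imageI finite_compatible_labellings)
  have norm: "norm v = sqrt (\<Sum>k=1..CARD('n). (real_of_int (m k))\<^sup>2)"
    if "v \<in> perm_vertex m ` ?L1 \<union> perm_vertex m ` ?L2" for v
    using that compatible_labellings_subset[of "set w1"] compatible_labellings_subset[of "set w2"]
    by (auto simp: norm_perm_vertex)
  assume "perm_eval m w1 = perm_eval m w2"
  then have "convex hull (perm_vertex m ` ?L1) = convex hull (perm_vertex m ` ?L2)"
    by (simp add: perm_eval_eq_convex_hull[OF m])
  then have "perm_vertex m ` ?L1 = perm_vertex m ` ?L2"
    using convex_hull_eq_imp_eq_equal_norm[OF fin[of "set w1"] fin[of "set w2"] norm] by blast
  then show "?L1 = ?L2"
    by (simp add: inj_on_image_eq_iff[OF inj_on_perm_vertex[OF m] compatible_labellings_subset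
          compatible_labellings_subset])
qed (simp add: perm_eval_eq_convex_hull[OF m])

section \<open>Every face is a word\<close>

text \<open>Exchange argument: swapping the labels of i and j changes the value of the functional by
  (a j - a i) (m (s i) - m (s j)), which is positive unless s i < s j.\<close>

lemma maximiser_labelling_ordered:
  assumes m: "strict_mono_on {1..CARD('n)} m" and s: "s \<in> (perm_labellings :: ('n::finite \<Rightarrow> nat) set)"
    and max: "\<And>s'. s' \<in> perm_labellings \<Longrightarrow> a \<bullet> perm_vertex m s' \<le> a \<bullet> perm_vertex m s"
    and less: "a $ i < a $ j"
  shows "s i < s j"
proof (rule ccontr)
  assume "\<not> s i < s j"
  moreover have "i \<noteq> j" using less by auto
  then have "s i \<noteq> s j" using perm_labellingsD[OF s] by (auto simp: bij_betw_def inj_eq)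
  ultimately have "s j < s i" by simp
  then have m_less: "m (s j) < m (s i)"
    using strict_mono_onD[OF m] perm_labelling_range[OF s] by blast
  define s' where "s' = s \<circ> Transposition.transpose i j"
  have "bij_betw s' UNIV {1..CARD('n)}"
    unfolding s'_def by (rule bij_betw_trans[OF _ perm_labellingsD[OF s]]) (simp add: bij_def)
  then have "s' \<in> perm_labellings" by (simp add: perm_labellings_def)
  define d where "d k = a $ k * (real_of_int (m (s' k)) - real_of_int (m (s k)))" for k
  have "a \<bullet> perm_vertex m s' - a \<bullet> perm_vertex m s = (\<Sum>k\<in>UNIV. d k)"
    unfolding inner_vec_def perm_vertex_def d_def by (simp add: sum_subtractf right_diff_distrib)
  also have "\<dots> = d i + d j"
    using \<open>i \<noteq> j\<close> by (subst sum.mono_neutral_right[of UNIV "{i, j}"]) (auto simp: d_def s'_def)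
  also have "\<dots> = (a $ j - a $ i) * (real_of_int (m (s i)) - real_of_int (m (s j)))"
    using \<open>i \<noteq> j\<close> by (simp add: d_def s'_def algebra_simps)
  also have "\<dots> > 0" using less m_less by simp
  finally show False using max[OF \<open>s' \<in> perm_labellings\<close>] by simp
qed

definition labellings_ordered_by :: "real ^ 'n::finite \<Rightarrow> ('n \<Rightarrow> nat) set" where
  "labellings_ordered_by a = {s \<in> perm_labellings. \<forall>i j. a $ i < a $ j \<longrightarrow> s i < s j}"

definition sublevel_sets :: "real ^ 'n::finite \<Rightarrow> 'n set set" where
  "sublevel_sets a = {{i. a $ i \<le> a $ t} | t. {i. a $ i \<le> a $ t} \<noteq> UNIV}"

lemma sublevel_sets_subset_perm_gens: "sublevel_sets a \<subseteq> perm_gens"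
  by (auto simp: sublevel_sets_def perm_gens_def)

lemma initial_block_sublevel_set:
  "s \<in> labellings_ordered_by a \<Longrightarrow> initial_block s {i. a $ i \<le> a $ t}"
  by (auto simp: labellings_ordered_by_def initial_block_def)

lemma compatible_labellings_sublevel_sets:
  "compatible_labellings (sublevel_sets a) = labellings_ordered_by a"
proof (intro equalityI subsetI)
  fix s assume s: "s \<in> compatible_labellings (sublevel_sets a)"
  have "s i < s j" if "a $ i < a $ j" for i j
  proof -
    have "j \<notin> {k. a $ k \<le> a $ i}" using that by simp
    then have "{k. a $ k \<le> a $ i} \<in> sublevel_sets a"
      unfolding sublevel_sets_def by blast
    with s have "initial_block s {k. a $ k \<le> a $ i}" by (simp add: compatible_labellings_def)
    with that show ?thesis unfolding initial_block_def by simp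
  qed
  with s show "s \<in> labellings_ordered_by a"
    by (simp add: compatible_labellings_def labellings_ordered_by_def)
next
  fix s assume "s \<in> labellings_ordered_by a"
  then show "s \<in> compatible_labellings (sublevel_sets a)"
    using initial_block_sublevel_set[of s a]
    by (auto simp: compatible_labellings_def labellings_ordered_by_def sublevel_sets_def)
qed

text \<open>A labelling ordered by a puts each sublevel set of a on the smallest labels, so the
  coefficient a (s\<inverse> k) is determined by k alone.\<close>

lemma labelling_ordered_by_inv_le_iff:
  fixes a :: "real ^ 'n::finite"
  assumes s: "s \<in> labellings_ordered_by a" and k: "k \<in> {1..CARD('n)}"
  shows "a $ inv s k \<le> a $ t \<longleftrightarrow> k \<le> card {i. a $ i \<le> a $ t}"
proof -
  have sl: "s \<in> perm_labellings" using s by (simp add: labellings_ordered_by_def)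
  have inj: "inj s" and range: "range s = {1..CARD('n)}"
    using perm_labellingsD[OF sl] by (auto simp: bij_betw_def)
  have sk: "s (inv s k) = k" using k range by (simp add: f_inv_into_f)
  have "a $ inv s k \<le> a $ t \<longleftrightarrow> s (inv s k) \<in> s ` {i. a $ i \<le> a $ t}"
    using inj by (simp add: inj_image_mem_iff)
  also have "\<dots> \<longleftrightarrow> k \<le> card {i. a $ i \<le> a $ t}"
    using initial_block_sublevel_set[OF s] initial_block_iff_image[OF sl] k sk by simp
  finally show ?thesis .
qed

lemma inner_perm_vertex_inv:
  assumes s: "s \<in> (perm_labellings :: ('n::finite \<Rightarrow> nat) set)"
  shows "a \<bullet> perm_vertex m s = (\<Sum>k=1..CARD('n). a $ inv s k * real_of_int (m k))"
proof -
  have "inj s" using perm_labellingsD[OF s] by (simp add: bij_betw_def)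
  then have "a \<bullet> perm_vertex m s = (\<Sum>i\<in>UNIV. (\<lambda>k. a $ inv s k * real_of_int (m k)) (s i))"
    unfolding inner_vec_def perm_vertex_def by simp
  also have "\<dots> = (\<Sum>k=1..CARD('n). a $ inv s k * real_of_int (m k))"
    by (rule sum.reindex_bij_betw[OF perm_labellingsD[OF s]])
  finally show ?thesis .
qed

lemma labellings_ordered_by_same_value:
  fixes a :: "real ^ 'n::finite"
  assumes s: "s \<in> labellings_ordered_by a" and s': "s' \<in> labellings_ordered_by a"
  shows "a \<bullet> perm_vertex m s = a \<bullet> perm_vertex m s'"
proof -
  have "a $ inv s k = a $ inv s' k" if k: "k \<in> {1..CARD('n)}" for k
    using labelling_ordered_by_inv_le_iff[OF s k] labelling_ordered_by_inv_le_iff[OF s' k]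
    by (metis order_antisym order_refl)
  moreover have "s \<in> perm_labellings" "s' \<in> perm_labellings"
    using s s' by (simp_all add: labellings_ordered_by_def)
  ultimately show ?thesis by (simp add: inner_perm_vertex_inv)
qed

lemma maximising_labellings_eq_ordered:
  assumes m: "strict_mono_on {1..CARD('n)} m"
    and le: "\<And>s. s \<in> perm_labellings \<Longrightarrow> a \<bullet> perm_vertex m s \<le> b"
    and ne: "{s \<in> perm_labellings. a \<bullet> perm_vertex m s = b} \<noteq> {}"
  shows "{s \<in> (perm_labellings :: ('n::finite \<Rightarrow> nat) set). a \<bullet> perm_vertex m s = b}
    = labellings_ordered_by a"
    (is "?T = _")
proof
  show "?T \<subseteq> labellings_ordered_by a"
  proof
    fix s assume "s \<in> ?T"
    then have s: "s \<in> perm_labellings"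
      and max: "\<And>s'. s' \<in> perm_labellings \<Longrightarrow> a \<bullet> perm_vertex m s' \<le> a \<bullet> perm_vertex m s"
      using le by auto
    then show "s \<in> labellings_ordered_by a"
      using maximiser_labelling_ordered[OF m s max] by (simp add: labellings_ordered_by_def)
  qed
  with ne obtain s0 where s0: "s0 \<in> ?T" "s0 \<in> labellings_ordered_by a" by blast
  show "labellings_ordered_by a \<subseteq> ?T"
  proof
    fix s assume s: "s \<in> labellings_ordered_by a"
    with s0 have "a \<bullet> perm_vertex m s = b"
      using labellings_ordered_by_same_value[OF s s0(2)] by simp
    with s show "s \<in> ?T" by (simp add: labellings_ordered_by_def)
  qed
qed

lemma nonempty_face_of_permutohedron:
  fixes F :: "(real ^ 'n::finite) set"
  assumes m: "strict_mono_on {1..CARD('n)} m"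
    and F: "F face_of permutohedron m" and "F \<noteq> {}"
  obtains S where "S \<subseteq> perm_gens" "F = convex hull (perm_vertex m ` compatible_labellings S)"
proof -
  have "polytope (permutohedron m :: (real ^ 'n) set)"
    unfolding permutohedron_def by (intro polytope_convex_hull finite_imageI finite_perm_labellings)
  then have "F exposed_face_of permutohedron m"
    using F exposed_face_of_polyhedron polytope_imp_polyhedron by blast
  then obtain a b where le: "permutohedron m \<subseteq> {x. a \<bullet> x \<le> b}"
    and F_eq: "F = permutohedron m \<inter> {x. a \<bullet> x = b}"
    unfolding exposed_face_of_def by blast
  have vertex_le: "a \<bullet> perm_vertex m s \<le> b" if "s \<in> perm_labellings" for s
    using le hull_subset[of "perm_vertex m ` perm_labellings" convex] that
    unfolding permutohedron_def by blast
  define T where "T = {s \<in> perm_labellings. a \<bullet> perm_vertex m s = b}"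
  have "F = convex hull {v \<in> perm_vertex m ` perm_labellings. a \<bullet> v = b}"
    unfolding F_eq permutohedron_def
    by (rule convex_hull_Int_supporting_hyperplane) (auto intro: finite_perm_labellings vertex_le)
  also have "{v \<in> perm_vertex m ` perm_labellings. a \<bullet> v = b} = perm_vertex m ` T"
    unfolding T_def by blast
  finally have F_T: "F = convex hull (perm_vertex m ` T)" .
  with \<open>F \<noteq> {}\<close> have "T \<noteq> {}" by auto
  then have "T = labellings_ordered_by a"
    using maximising_labellings_eq_ordered[OF m vertex_le] by (simp add: T_def)
  then have "T = compatible_labellings (sublevel_sets a)"
    by (simp add: compatible_labellings_sublevel_sets)
  with F_T show ?thesis by (intro that[of "sublevel_sets a"] sublevel_sets_subset_perm_gens) simp
qed

lemma face_of_permutohedron_eq_perm_eval: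
  fixes F :: "(real ^ 'n::finite) set"
  assumes m: "strict_mono_on {1..CARD('n)} m" and card: "2 \<le> CARD('n)"
    and F: "F face_of permutohedron m"
  obtains w where "set w \<subseteq> perm_gens" "perm_eval m w = F"
proof (cases "F = {}")
  case True
  obtain i k :: 'n where "i \<noteq> k"
    using card by (metis card_2_iff' ex_card)
  then have gens: "set [{i}, {k}] \<subseteq> perm_gens" by (auto simp: perm_gens_def)
  have "\<not> chain\<^sub>\<subseteq> (set [{i}, {k}])" using \<open>i \<noteq> k\<close> by (auto simp: chain_subset_def)
  then have "perm_eval m [{i}, {k}] = F"
    using True by (simp add: perm_eval_eq_convex_hull[OF m] compatible_labellings_empty)
  with gens show ?thesis by (rule that)
next
  case False
  then obtain S where S: "S \<subseteq> perm_gens" "F = convex hull (perm_vertex m ` compatible_labellings S)"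
    using nonempty_face_of_permutohedron[OF m F] by blast
  have "finite S" by simp
  then obtain w where "set w = S" using finite_list by blast
  with S show ?thesis by (intro that[of w]) (simp_all add: perm_eval_eq_convex_hull[OF m])
qed

section \<open>The word congruence\<close>

declare perm_cong.trans[trans]

lemma perm_cong_append:
  assumes "perm_cong w w'" "set u \<subseteq> perm_gens" "set v \<subseteq> perm_gens"
  shows "perm_cong (u @ w @ v) (u @ w' @ v)"
  using assms
proof (induction rule: perm_cong.induct)
  case (refl w)
  then show ?case by (intro perm_cong.refl) auto
next
  case (step l r u' v')
  have "perm_cong ((u @ u') @ l @ (v' @ v)) ((u @ u') @ r @ (v' @ v))"
    by (rule perm_cong.step) (use step in auto)
  then show ?case by simp
next
  case (sym w w')
  show ?case by (rule perm_cong.sym) (rule sym.IH[OF sym.prems])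
next
  case (trans w w' w'')
  show ?case by (rule perm_cong.trans[OF trans.IH(1)[OF trans.prems] trans.IH(2)[OF trans.prems]])
qed

lemma perm_cong_Cons_snoc:
  "set (x # w) \<subseteq> perm_gens \<Longrightarrow> perm_cong (x # w) (w @ [x])"
proof (induction w)
  case Nil
  then show ?case using perm_cong.refl[of "[x]"] by simp
next
  case (Cons y w)
  have "perm_cong ([] @ [x, y] @ w) ([] @ [y, x] @ w)"
    by (rule perm_cong.step) (use Cons.prems in \<open>auto intro: perm_relator.comm\<close>)
  then have "perm_cong (x # y # w) (y # x # w)" by simp
  also have "perm_cong ([y] @ (x # w) @ []) ([y] @ (w @ [x]) @ [])"
    by (rule perm_cong_append) (use Cons in auto)
  then have "perm_cong (y # x # w) (y # w @ [x])" by simp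
  finally show ?case by simp
qed

lemma perm_cong_append_commute:
  "set u \<subseteq> perm_gens \<Longrightarrow> set v \<subseteq> perm_gens \<Longrightarrow> perm_cong (u @ v) (v @ u)"
proof (induction u)
  case Nil
  then show ?case by (auto intro: perm_cong.refl)
next
  case (Cons x u)
  have "perm_cong (x # u @ v) ((u @ v) @ [x])"
    by (rule perm_cong_Cons_snoc) (use Cons.prems in auto)
  also have "perm_cong ([] @ (u @ v) @ [x]) ([] @ (v @ u) @ [x])"
    by (rule perm_cong_append) (use Cons in auto)
  then have "perm_cong ((u @ v) @ [x]) ((v @ u) @ [x])" by simp
  also have "perm_cong (v @ (x # u) @ []) (v @ (u @ [x]) @ [])"
    by (rule perm_cong_append[OF perm_cong_Cons_snoc]) (use Cons.prems in auto)
  then have "perm_cong ((v @ u) @ [x]) (v @ x # u)" by (simp add: perm_cong.sym)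
  finally show ?case by simp
qed

lemma perm_cong_Cons_member:
  assumes "set w \<subseteq> perm_gens" and "x \<in> set w"
  shows "perm_cong (x # w) w"
proof -
  obtain u v where w: "w = u @ x # v" using split_list[OF \<open>x \<in> set w\<close>] by blast
  have gens: "set u \<subseteq> perm_gens" "set v \<subseteq> perm_gens" "x \<in> perm_gens" using assms w by auto
  have "perm_cong ([] @ (x # u) @ (x # v)) ([] @ (u @ [x]) @ (x # v))"
    by (rule perm_cong_append[OF perm_cong_Cons_snoc]) (use gens in auto)
  then have "perm_cong (x # w) (u @ [x, x] @ v)" by (simp add: w)
  also have "perm_cong (u @ [x, x] @ v) (u @ [x] @ v)"
    by (rule perm_cong.step) (use gens in \<open>auto intro: perm_relator.idem\<close>)
  finally show ?thesis by (simp add: w)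
qed

lemma perm_cong_append_subset:
  "set w \<subseteq> perm_gens \<Longrightarrow> set u \<subseteq> set w \<Longrightarrow> perm_cong (u @ w) w"
proof (induction u)
  case Nil
  then show ?case by (auto intro: perm_cong.refl)
next
  case (Cons x u)
  have "perm_cong ([x] @ (u @ w) @ []) ([x] @ w @ [])"
    by (rule perm_cong_append) (use Cons in auto)
  then have "perm_cong (x # u @ w) (x # w)" by simp
  also have "perm_cong (x # w) w"
    by (rule perm_cong_Cons_member) (use Cons.prems in auto)
  finally show ?case by simp
qed

lemma perm_cong_set_eq:
  assumes "set w \<subseteq> perm_gens" "set w = set w'"
  shows "perm_cong w w'"
proof -
  have "perm_cong w (w' @ w)"
    by (rule perm_cong.sym, rule perm_cong_append_subset) (use assms in auto)
  also have "perm_cong (w' @ w) (w @ w')"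
    by (rule perm_cong_append_commute) (use assms in auto)
  also have "perm_cong (w @ w') w'"
    by (rule perm_cong_append_subset) (use assms in auto)
  finally show ?thesis .
qed

text \<open>The absorption relation makes a product of two incomparable generators a zero.\<close>

lemma perm_cong_incomparable_append:
  assumes "J \<in> perm_gens" "K \<in> perm_gens" "\<not> J \<subseteq> K" "\<not> K \<subseteq> J"
  shows "set v \<subseteq> perm_gens \<Longrightarrow> perm_cong ([J, K] @ v) [J, K]"
proof (induction v)
  case Nil
  then show ?case using assms by (auto intro: perm_cong.refl)
next
  case (Cons L v)
  have "perm_cong ([] @ [J, K] @ v) ([] @ [J, K, L] @ v)"
    by (rule perm_cong.step) (use assms Cons.prems in \<open>auto intro: perm_relator.absorb\<close>)
  then have "perm_cong ([J, K] @ L # v) ([J, K] @ v)" by (simp add: perm_cong.sym)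
  also have "perm_cong ([J, K] @ v) [J, K]" using Cons by simp
  finally show ?case .
qed

lemma perm_cong_non_chain_append:
  assumes gens: "set u \<subseteq> perm_gens" "set v \<subseteq> perm_gens" and "\<not> chain\<^sub>\<subseteq> (set u)"
  shows "perm_cong (u @ v) u"
proof -
  obtain J K where JK: "J \<in> set u" "K \<in> set u" "\<not> J \<subseteq> K" "\<not> K \<subseteq> J"
    using \<open>\<not> chain\<^sub>\<subseteq> (set u)\<close> unfolding chain_subset_def by blast
  have zero: "perm_cong ([J, K] @ x) [J, K]" if "set x \<subseteq> perm_gens" for x
    using perm_cong_incomparable_append[of J K x] JK gens that by auto
  have "perm_cong (u @ v) ([J, K] @ u @ v)"
    by (rule perm_cong_set_eq) (use JK gens in auto)
  also have "perm_cong ([J, K] @ u @ v) [J, K]" by (rule zero) (use gens in auto)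
  also have "perm_cong [J, K] ([J, K] @ u)" by (rule perm_cong.sym, rule zero) (use gens in auto)
  also have "perm_cong ([J, K] @ u) u"
    by (rule perm_cong_set_eq) (use JK gens in auto)
  finally show ?thesis .
qed

lemma perm_cong_non_chains:
  assumes "set w \<subseteq> perm_gens" "set w' \<subseteq> perm_gens"
    and "\<not> chain\<^sub>\<subseteq> (set w)" "\<not> chain\<^sub>\<subseteq> (set w')"
  shows "perm_cong w w'"
proof -
  have "perm_cong w (w @ w')"
    by (rule perm_cong.sym, rule perm_cong_non_chain_append) (use assms in auto)
  also have "perm_cong (w @ w') (w' @ w)" by (rule perm_cong_append_commute) (use assms in auto)
  also have "perm_cong (w' @ w) w'" by (rule perm_cong_non_chain_append) (use assms in auto)
  finally show ?thesis .
qed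

lemma perm_cong_imp_compatible_labellings_eq:
  "perm_cong w w' \<Longrightarrow> compatible_labellings (set w) = compatible_labellings (set w')"
proof (induction rule: perm_cong.induct)
  case (step l r u v)
  then show ?case
  proof (cases rule: perm_relator.cases)
    case (comm J K)
    then show ?thesis by (simp add: insert_commute)
  next
    case (absorb J K L)
    then have "J \<in> set (u @ l @ v)" "K \<in> set (u @ l @ v)" "J \<in> set (u @ r @ v)" "K \<in> set (u @ r @ v)"
      and "\<not> J \<subseteq> K" "\<not> K \<subseteq> J"
      by auto
    then have "\<not> chain\<^sub>\<subseteq> (set (u @ l @ v))" "\<not> chain\<^sub>\<subseteq> (set (u @ r @ v))"
      unfolding chain_subset_def by blast+
    then show ?thesis by (simp add: compatible_labellings_empty)
  qed simp
qed simp_all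

lemma perm_cong_iff_compatible_labellings_eq:
  assumes gens: "set w \<subseteq> perm_gens" "set w' \<subseteq> perm_gens"
  shows "perm_cong w w' \<longleftrightarrow> compatible_labellings (set w) = compatible_labellings (set w')"
proof
  assume eq: "compatible_labellings (set w) = compatible_labellings (set w')"
  show "perm_cong w w'"
  proof (cases "compatible_labellings (set w) = {}")
    case True
    with eq have "\<not> chain\<^sub>\<subseteq> (set w)" "\<not> chain\<^sub>\<subseteq> (set w')"
      using compatible_labellings_nonempty[of "set w"] compatible_labellings_nonempty[of "set w'"]
      by auto
    with gens show ?thesis by (rule perm_cong_non_chains)
  next
    case False
    with gens eq have "set w = set w'" by (rule compatible_labellings_inj)
    with gens show ?thesis by (intro perm_cong_set_eq)
  qed
qed (rule perm_cong_imp_compatible_labellings_eq)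

theorem mainTheorem9:
  fixes m :: "nat \<Rightarrow> int"
  assumes card: "CARD('n::finite) \<ge> 2"
    and m_nonneg: "0 \<le> m 1"
    and m_incr: "\<And>i j. 1 \<le> i \<Longrightarrow> i < j \<Longrightarrow> j \<le> CARD('n) \<Longrightarrow> m i < m j"
  shows "(\<forall>J\<in>(perm_gens :: 'n set set). perm_facet m J face_of permutohedron m)
    \<and> (\<forall>w. set w \<subseteq> (perm_gens :: 'n set set) \<longrightarrow> perm_eval m w face_of permutohedron m)
    \<and> (\<forall>F. F face_of (permutohedron m :: (real ^ 'n) set) \<longrightarrow>
          (\<exists>w. set w \<subseteq> perm_gens \<and> perm_eval m w = F))
    \<and> (\<forall>w1 w2. set w1 \<subseteq> (perm_gens :: 'n set set) \<longrightarrow> set w2 \<subseteq> perm_gens \<longrightarrow>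
          (perm_eval m w1 = perm_eval m w2 \<longleftrightarrow> perm_cong w1 w2))"
proof -
  have m: "strict_mono_on {1..CARD('n)} m" by (rule strict_mono_onI) (use m_incr in auto)
  have convex: "convex (permutohedron m :: (real ^ 'n) set)"
    unfolding permutohedron_def by (rule convex_convex_hull)
  have facet: "perm_facet m J face_of permutohedron m" for J :: "'n set"
    unfolding perm_facet_eq[OF m]
    by (rule face_of_Int_supporting_hyperplane_ge[OF convex facet_level_le_permutohedron[OF m]])
  have "perm_eval m w face_of permutohedron m" for w :: "'n set list"
  proof -
    have "\<Inter> (insert (permutohedron m) (perm_facet m ` set w)) face_of permutohedron m"
      by (rule face_of_Inter) (use face_of_refl[OF convex] facet in auto)
    then show ?thesis by (simp add: perm_eval_def)
  qed
  moreover have "\<exists>w. set w \<subseteq> perm_gens \<and> perm_eval m w = F"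
    if "F face_of (permutohedron m :: (real ^ 'n) set)" for F
    using face_of_permutohedron_eq_perm_eval[OF m card that] by metis
  moreover have "perm_eval m w1 = perm_eval m w2 \<longleftrightarrow> perm_cong w1 w2"
    if "set w1 \<subseteq> (perm_gens :: 'n set set)" "set w2 \<subseteq> perm_gens" for w1 w2
    by (simp add: perm_eval_eq_iff[OF m] perm_cong_iff_compatible_labellings_eq[OF that])
  ultimately show ?thesis using facet by blast
qed

end
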